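(* Let $G$ be a finite abelian group and $A$ a finite dimensional $G$-graded algebra with a regular grading with bicharacter $\beta$ whose regular decomposition is minimal. Let $A=D_1\oplus\cdots\oplus D_k\oplus J(A)$ (vector space direct sum) where $D_1,\dots,D_k$ are graded subalgebras with $D_iD_j=0$ for $i\ne j$, each $D_i$ graded-isomorphic to $K^\alpha G$ for a 2-cocycle $\alpha$ inducing $\beta$. Then each $D_i$ is a (central) simple algebra, so this is an ordinary Wedderburn–Malcev decomposition of $A$, and $D_i\,J(A)\,D_j=0$ for all $1\le i\ne j\le k$.
   Context: All algebras are associative with unit over an algebraically closed field $K$ of characteristic $0$; $G$ is finite abelian, written additively. A $G$-graded algebra $A$ has a regular grading if (i) for every $n$ and every $(g_1,\dots,g_n)\in G^n$ there exist $a_i\in A_{g_i}$ with $a_1\cdots a_n\ne0$, and (ii) there is $\beta\colon G\times G\to K^*$ with $a_ga_h=\beta(g,h)a_ha_g$ for all homogeneous $a_g\in A_g,a_h\in A_h$ ($\beta$ = bicharacter of $A$). The regular decomposition is minimal if there do not exist $g\neq h$ in $G$ with $\beta(x,g)=\beta(x,h)$ for all $x\in G$. For a 2-cocycle $\alpha$, $K^\alpha G$ has basis $\{X_g\}$ with $X_gX_h=\alpha(g,h)X_{g+h}$ and grading $(K^\alpha G)_g=KX_g$; $\alpha$ induces $\beta$ if $\beta(g,h)=\alpha(g,h)\alpha(h,g)^{-1}$. $J(A)$ denotes the Jacobson radical. *)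

theory Defs
  imports Main "HOL-Computational_Algebra.Polynomial"
begin

definition alg_closed_field :: "'k::field itself \<Rightarrow> bool" where
  "alg_closed_field _ \<longleftrightarrow> (\<forall>p :: 'k poly. degree p > 0 \<longrightarrow> (\<exists>x. poly p x = 0))"

definition k_algebra :: "('k::field \<Rightarrow> 'a::ring_1 \<Rightarrow> 'a) \<Rightarrow> bool" where
  "k_algebra scale \<longleftrightarrow> vector_space scale \<and>
     (\<forall>c x y. scale c (x * y) = scale c x * y \<and> scale c (x * y) = x * scale c y)"

definition fin_dim_algebra :: "('k::field \<Rightarrow> 'a::ring_1 \<Rightarrow> 'a) \<Rightarrow> bool" where
  "fin_dim_algebra scale \<longleftrightarrow> k_algebra scale \<and>
     (\<exists>B. finite B \<and> module.span scale B = UNIV)"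

definition graded_algebra ::
  "('k::field \<Rightarrow> 'a::ring_1 \<Rightarrow> 'a) \<Rightarrow> ('g::{finite,ab_group_add} \<Rightarrow> 'a set) \<Rightarrow> bool" where
  "graded_algebra scale Agr \<longleftrightarrow>
     (\<forall>g. module.subspace scale (Agr g)) \<and>
     (\<forall>a. \<exists>!f. (\<forall>g. f g \<in> Agr g) \<and> a = (\<Sum>g\<in>UNIV. f g)) \<and>
     (\<forall>g h x y. x \<in> Agr g \<longrightarrow> y \<in> Agr h \<longrightarrow> x * y \<in> Agr (g + h))"

definition regular_grading ::
  "('k::field \<Rightarrow> 'a::ring_1 \<Rightarrow> 'a) \<Rightarrow> ('g::{finite,ab_group_add} \<Rightarrow> 'a set) \<Rightarrow> ('g \<Rightarrow> 'g \<Rightarrow> 'k) \<Rightarrow> bool" where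
  "regular_grading scale Agr \<beta> \<longleftrightarrow>
     (\<forall>gs :: 'g list. \<exists>as :: 'a list. length as = length gs \<and>
         (\<forall>i < length gs. as ! i \<in> Agr (gs ! i)) \<and> prod_list as \<noteq> 0) \<and>
     (\<forall>g h. \<beta> g h \<noteq> 0) \<and>
     (\<forall>g h a b. a \<in> Agr g \<longrightarrow> b \<in> Agr h \<longrightarrow> a * b = scale (\<beta> g h) (b * a))"

definition minimal_regular :: "('g \<Rightarrow> 'g \<Rightarrow> 'k) \<Rightarrow> bool" where
  "minimal_regular \<beta> \<longleftrightarrow> \<not> (\<exists>g h. g \<noteq> h \<and> (\<forall>x. \<beta> x g = \<beta> x h))"

definition two_cocycle :: "('g::ab_group_add \<Rightarrow> 'g \<Rightarrow> 'k::field) \<Rightarrow> bool" where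
  "two_cocycle \<alpha> \<longleftrightarrow> (\<forall>g h. \<alpha> g h \<noteq> 0) \<and>
     (\<forall>g h l. \<alpha> g h * \<alpha> (g + h) l = \<alpha> h l * \<alpha> g (h + l))"

definition induces :: "('g \<Rightarrow> 'g \<Rightarrow> 'k::field) \<Rightarrow> ('g \<Rightarrow> 'g \<Rightarrow> 'k) \<Rightarrow> bool" where
  "induces \<alpha> \<beta> \<longleftrightarrow> (\<forall>g h. \<beta> g h = \<alpha> g h / \<alpha> h g)"

text \<open>The twisted group algebra K^alpha G, realised on functions G \<Rightarrow> K:
  f corresponds to the sum of f g X_g.  Multiplication, scalar action and
  homogeneous components.\<close>
definition tw_mult :: "('g::{finite,ab_group_add} \<Rightarrow> 'g \<Rightarrow> 'k::field) \<Rightarrow> ('g \<Rightarrow> 'k) \<Rightarrow> ('g \<Rightarrow> 'k) \<Rightarrow> ('g \<Rightarrow> 'k)" where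
  "tw_mult \<alpha> f1 f2 = (\<lambda>z. \<Sum>g\<in>UNIV. \<Sum>h\<in>UNIV. if g + h = z then \<alpha> g h * f1 g * f2 h else 0)"

definition tw_scale :: "'k::field \<Rightarrow> ('g \<Rightarrow> 'k) \<Rightarrow> ('g \<Rightarrow> 'k)" where
  "tw_scale c f = (\<lambda>g. c * f g)"

definition tw_component :: "'g \<Rightarrow> ('g \<Rightarrow> 'k::field) set" where
  "tw_component g = {f. \<forall>h. h \<noteq> g \<longrightarrow> f h = 0}"

definition graded_iso_twisted ::
  "('k::field \<Rightarrow> 'a::ring_1 \<Rightarrow> 'a) \<Rightarrow> ('g::{finite,ab_group_add} \<Rightarrow> 'a set) \<Rightarrow> ('g \<Rightarrow> 'g \<Rightarrow> 'k) \<Rightarrow> 'a set \<Rightarrow> bool" where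
  "graded_iso_twisted scale Agr \<alpha> D \<longleftrightarrow>
     (\<exists>\<phi> :: ('g \<Rightarrow> 'k) \<Rightarrow> 'a.
        bij_betw \<phi> UNIV D \<and>
        (\<forall>f1 f2. \<phi> (\<lambda>g. f1 g + f2 g) = \<phi> f1 + \<phi> f2) \<and>
        (\<forall>c f. \<phi> (tw_scale c f) = scale c (\<phi> f)) \<and>
        (\<forall>f1 f2. \<phi> (tw_mult \<alpha> f1 f2) = \<phi> f1 * \<phi> f2) \<and>
        (\<forall>g. \<phi> ` tw_component g = D \<inter> Agr g))"

text \<open>Graded subalgebra (not required to contain the unit of A).\<close>
definition graded_subalgebra ::
  "('k::field \<Rightarrow> 'a::ring_1 \<Rightarrow> 'a) \<Rightarrow> ('g::{finite,ab_group_add} \<Rightarrow> 'a set) \<Rightarrow> 'a set \<Rightarrow> bool" where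
  "graded_subalgebra scale Agr D \<longleftrightarrow> module.subspace scale D \<and>
     (\<forall>x\<in>D. \<forall>y\<in>D. x * y \<in> D) \<and>
     (\<forall>d\<in>D. \<exists>f. (\<forall>g. f g \<in> D \<inter> Agr g) \<and> d = (\<Sum>g\<in>UNIV. f g))"

definition left_ideal :: "'a::ring_1 set \<Rightarrow> bool" where
  "left_ideal I \<longleftrightarrow> 0 \<in> I \<and> (\<forall>x\<in>I. \<forall>y\<in>I. x + y \<in> I) \<and> (\<forall>r. \<forall>x\<in>I. r * x \<in> I)"

definition maximal_left_ideal :: "'a::ring_1 set \<Rightarrow> bool" where
  "maximal_left_ideal I \<longleftrightarrow> left_ideal I \<and> I \<noteq> UNIV \<and>
     (\<forall>L. left_ideal L \<and> I \<subseteq> L \<and> L \<noteq> UNIV \<longrightarrow> L = I)"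

definition jacobson_radical :: "'a::ring_1 set" where
  "jacobson_radical = \<Inter> {I. maximal_left_ideal I}"

definition ideal_of_subalg :: "('k::field \<Rightarrow> 'a::ring_1 \<Rightarrow> 'a) \<Rightarrow> 'a set \<Rightarrow> 'a set \<Rightarrow> bool" where
  "ideal_of_subalg scale D I \<longleftrightarrow> I \<subseteq> D \<and> module.subspace scale I \<and>
     (\<forall>d\<in>D. \<forall>x\<in>I. d * x \<in> I \<and> x * d \<in> I)"

definition simple_subalg :: "('k::field \<Rightarrow> 'a::ring_1 \<Rightarrow> 'a) \<Rightarrow> 'a set \<Rightarrow> bool" where
  "simple_subalg scale D \<longleftrightarrow> (\<exists>x\<in>D. \<exists>y\<in>D. x * y \<noteq> 0) \<and>
     (\<forall>I. ideal_of_subalg scale D I \<longrightarrow> I = {0} \<or> I = D)"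

definition central_subalg :: "('k::field \<Rightarrow> 'a::ring_1 \<Rightarrow> 'a) \<Rightarrow> 'a set \<Rightarrow> bool" where
  "central_subalg scale D \<longleftrightarrow> (\<exists>e\<in>D. (\<forall>x\<in>D. e * x = x \<and> x * e = x) \<and>
     {z\<in>D. \<forall>x\<in>D. z * x = x * z} = range (\<lambda>c. scale c e))"

end

theory Submission
  imports Defs
begin

text \<open>In \<open>K\<^sup>\<alpha>G\<close> multiplying by \<open>X\<^sub>x\<close> on the left and on the right differs,
  on the component of degree \<open>g\<close>, by the factor \<open>\<beta>(x, g)\<close>. Hence from a nonzero element
  \<open>z\<close> of an ideal and a degree \<open>x\<close> with \<open>\<beta>(x, g\<^sub>0) \<noteq> \<beta>(x, g\<^sub>1)\<close>, which exists by
  minimality, the ideal contains \<open>X\<^sub>x z - \<beta>(x, g\<^sub>0) z X\<^sub>x\<close>, a nonzero element of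
  strictly smaller support. So every nonzero ideal contains some \<open>c X\<^sub>g\<close>, which is
  invertible: \<open>K\<^sup>\<alpha>G\<close> is simple. The same computation shows that a central element
  is supported in degree \<open>0\<close>, so \<open>K\<^sup>\<alpha>G\<close> is central.

  The unit \<open>e\<^sub>i\<close> of \<open>D\<^sub>i \<cong> K\<^sup>\<alpha>G\<close> has degree \<open>0\<close>, and since \<open>\<beta>(0, h) = 1\<close>
  homogeneous elements of degree \<open>0\<close> are central in \<open>A\<close>. Therefore
  \<open>x y z = x e\<^sub>i y e\<^sub>j z = x y e\<^sub>i e\<^sub>j z = 0\<close> for \<open>x \<in> D\<^sub>i\<close>, \<open>z \<in> D\<^sub>j\<close>, \<open>i \<noteq> j\<close>.\<close>

definition tw_monom :: "'g \<Rightarrow> 'k::field \<Rightarrow> 'g \<Rightarrow> 'k" where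
  "tw_monom g c = (\<lambda>p. if p = g then c else 0)"

lemma tw_mult_monom_left:
  fixes \<alpha> :: "'g::{finite,ab_group_add} \<Rightarrow> 'g \<Rightarrow> 'k::field"
  shows "tw_mult \<alpha> (tw_monom x c) f q = c * \<alpha> x (q - x) * f (q - x)"
proof -
  have "tw_mult \<alpha> (tw_monom x c) f q =
     (\<Sum>g\<in>UNIV. \<Sum>h\<in>UNIV. if h = q - g then (if g = x then \<alpha> g h * c * f h else 0) else 0)"
    unfolding tw_mult_def tw_monom_def by (intro sum.cong refl) (auto simp: algebra_simps)
  also have "\<dots> = c * \<alpha> x (q - x) * f (q - x)"
    by (simp add: sum.delta mult.commute mult.left_commute)
  finally show ?thesis .
qed

lemma tw_mult_monom_right:
  fixes \<alpha> :: "'g::{finite,ab_group_add} \<Rightarrow> 'g \<Rightarrow> 'k::field"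
  shows "tw_mult \<alpha> f (tw_monom x c) q = c * \<alpha> (q - x) x * f (q - x)"
proof -
  have "tw_mult \<alpha> f (tw_monom x c) q =
     (\<Sum>h\<in>UNIV. \<Sum>g\<in>UNIV. if g = q - h then (if h = x then \<alpha> g h * f g * c else 0) else 0)"
    unfolding tw_mult_def tw_monom_def
    by (subst sum.swap) (intro sum.cong refl, auto simp: algebra_simps)
  also have "\<dots> = c * \<alpha> (q - x) x * f (q - x)"
    by (simp add: sum.delta mult.commute mult.left_commute)
  finally show ?thesis .
qed

lemma two_cocycle_nonzero: "two_cocycle \<alpha> \<Longrightarrow> \<alpha> g h \<noteq> 0"
  unfolding two_cocycle_def by blast

lemma two_cocycle_normalized:
  assumes "two_cocycle \<alpha>"
  shows "\<alpha> 0 h = \<alpha> 0 0" and "\<alpha> g 0 = \<alpha> 0 0"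
proof -
  have cocycle: "\<And>g h l. \<alpha> g h * \<alpha> (g + h) l = \<alpha> h l * \<alpha> g (h + l)"
    using assms unfolding two_cocycle_def by blast
  from cocycle[of 0 0 h] two_cocycle_nonzero[OF assms] show "\<alpha> 0 h = \<alpha> 0 0" by simp
  from cocycle[of g 0 0] two_cocycle_nonzero[OF assms] show "\<alpha> g 0 = \<alpha> 0 0" by simp
qed

lemma induces_zero:
  assumes "two_cocycle \<alpha>" and "induces \<alpha> \<beta>"
  shows "\<beta> x 0 = 1" and "\<beta> 0 x = 1"
  using assms(2) two_cocycle_nonzero[OF assms(1)]
    two_cocycle_normalized(1)[OF assms(1), of x] two_cocycle_normalized(2)[OF assms(1), of x]
  unfolding induces_def by simp_all

lemma induces_swap:
  assumes "two_cocycle \<alpha>" and "induces \<alpha> \<beta>"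
  shows "\<alpha> g h = \<beta> g h * \<alpha> h g"
  using assms two_cocycle_nonzero[OF assms(1)] unfolding induces_def by simp

text \<open>The unit of \<open>K\<^sup>\<alpha>G\<close> is \<open>\<alpha>(0,0)\<^sup>-\<^sup>1 X\<^sub>0\<close>, not \<open>X\<^sub>0\<close>: the cocycle need not be normalised.\<close>

definition tw_unit :: "('g::{finite,ab_group_add} \<Rightarrow> 'g \<Rightarrow> 'k::field) \<Rightarrow> 'g \<Rightarrow> 'k" where
  "tw_unit \<alpha> = tw_monom 0 (inverse (\<alpha> 0 0))"

lemma tw_mult_unit:
  assumes "two_cocycle \<alpha>"
  shows "tw_mult \<alpha> (tw_unit \<alpha>) f = f" and "tw_mult \<alpha> f (tw_unit \<alpha>) = f"
proof -
  have "inverse (\<alpha> 0 0) * \<alpha> 0 q = 1" "inverse (\<alpha> 0 0) * \<alpha> q 0 = 1" for q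
    using two_cocycle_normalized(1)[OF assms, of q] two_cocycle_normalized(2)[OF assms, of q]
      two_cocycle_nonzero[OF assms] by simp_all
  then show "tw_mult \<alpha> (tw_unit \<alpha>) f = f" and "tw_mult \<alpha> f (tw_unit \<alpha>) = f"
    by (simp_all add: fun_eq_iff tw_unit_def tw_mult_monom_left tw_mult_monom_right)
qed

lemma tw_unit_nonzero: "two_cocycle \<alpha> \<Longrightarrow> tw_unit \<alpha> \<noteq> (\<lambda>_. 0)"
  by (auto simp: tw_unit_def tw_monom_def fun_eq_iff dest: two_cocycle_nonzero)

lemma tw_commutator_monom:
  assumes "two_cocycle \<alpha>" and "induces \<alpha> \<beta>"
  shows "tw_mult \<alpha> (tw_monom x 1) z p - \<beta> x g * tw_mult \<alpha> z (tw_monom x 1) p =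
    z (p - x) * \<alpha> (p - x) x * (\<beta> x (p - x) - \<beta> x g)"
  using induces_swap[OF assms, of x "p - x"]
  by (simp add: tw_mult_monom_left tw_mult_monom_right algebra_simps)

lemma tw_center:
  assumes co: "two_cocycle \<alpha>" and ind: "induces \<alpha> \<beta>" and min: "minimal_regular \<beta>"
    and z: "\<forall>f. tw_mult \<alpha> f z = tw_mult \<alpha> z f"
  shows "z = tw_scale (z 0 * \<alpha> 0 0) (tw_unit \<alpha>)"
proof -
  have "z g = 0" if "g \<noteq> 0" for g
  proof (rule ccontr)
    assume zg: "z g \<noteq> 0"
    have "\<beta> x g = \<beta> x 0" for x
    proof -
      have "tw_mult \<alpha> (tw_monom x 1) z (g + x) - \<beta> x 0 * tw_mult \<alpha> z (tw_monom x 1) (g + x) = 0"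
        using z induces_zero(1)[OF co ind] by simp
      then show ?thesis
        using zg two_cocycle_nonzero[OF co] by (simp add: tw_commutator_monom[OF co ind])
    qed
    with \<open>g \<noteq> 0\<close> min show False unfolding minimal_regular_def by blast
  qed
  then show ?thesis
    using two_cocycle_nonzero[OF co] by (auto simp: fun_eq_iff tw_scale_def tw_unit_def tw_monom_def)
qed

definition tw_ideal :: "('g::{finite,ab_group_add} \<Rightarrow> 'g \<Rightarrow> 'k::field) \<Rightarrow> ('g \<Rightarrow> 'k) set \<Rightarrow> bool" where
  "tw_ideal \<alpha> S \<longleftrightarrow> (\<lambda>_. 0) \<in> S \<and> (\<forall>f\<in>S. \<forall>h\<in>S. (\<lambda>x. f x + h x) \<in> S) \<and>
     (\<forall>c. \<forall>f\<in>S. tw_scale c f \<in> S) \<and> (\<forall>f. \<forall>s\<in>S. tw_mult \<alpha> f s \<in> S \<and> tw_mult \<alpha> s f \<in> S)"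

lemma tw_ideal_contains_monom:
  assumes co: "two_cocycle \<alpha>" and ind: "induces \<alpha> \<beta>" and min: "minimal_regular \<beta>"
    and S: "tw_ideal \<alpha> S"
  shows "z \<in> S \<Longrightarrow> z \<noteq> (\<lambda>_. 0) \<Longrightarrow> \<exists>g c. c \<noteq> 0 \<and> tw_monom g c \<in> S"
proof (induction "card {p. z p \<noteq> 0}" arbitrary: z rule: less_induct)
  case less
  from less.prems(2) obtain g0 where g0: "z g0 \<noteq> 0" by auto
  show ?case
  proof (cases "\<exists>g1. g1 \<noteq> g0 \<and> z g1 \<noteq> 0")
    case False
    then have "z = tw_monom g0 (z g0)" by (auto simp: tw_monom_def fun_eq_iff)
    with g0 less.prems(1) show ?thesis by metis
  next
    case True
    then obtain g1 where g1: "g1 \<noteq> g0" "z g1 \<noteq> 0" by auto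
    from min g1(1) obtain x where x: "\<beta> x g1 \<noteq> \<beta> x g0" unfolding minimal_regular_def by metis
    define w where "w = (\<lambda>p. tw_mult \<alpha> (tw_monom x 1) z p +
         tw_scale (- \<beta> x g0) (tw_mult \<alpha> z (tw_monom x 1)) p)"
    have "w \<in> S" unfolding w_def using S less.prems(1) unfolding tw_ideal_def by blast
    have w: "w p = z (p - x) * \<alpha> (p - x) x * (\<beta> x (p - x) - \<beta> x g0)" for p
      using tw_commutator_monom[OF co ind, of x z p g0] by (simp add: w_def tw_scale_def)
    have "{p. w p \<noteq> 0} = (\<lambda>q. q + x) ` {q. z q \<noteq> 0 \<and> \<beta> x q \<noteq> \<beta> x g0}"
      by (force simp: w two_cocycle_nonzero[OF co] image_iff intro: exI[of _ "_ - x"])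
    then have "card {p. w p \<noteq> 0} = card {q. z q \<noteq> 0 \<and> \<beta> x q \<noteq> \<beta> x g0}"
      by (simp add: card_image inj_on_def)
    also have "\<dots> < card {p. z p \<noteq> 0}"
      by (rule psubset_card_mono) (use g0 in auto)
    finally have "card {p. w p \<noteq> 0} < card {p. z p \<noteq> 0}" .
    moreover have "w \<noteq> (\<lambda>_. 0)"
      using g1 x two_cocycle_nonzero[OF co] by (auto simp: fun_eq_iff w intro: exI[of _ "g1 + x"])
    ultimately show ?thesis using less.hyps \<open>w \<in> S\<close> by blast
  qed
qed

lemma tw_ideal_trivial:
  assumes co: "two_cocycle \<alpha>" and ind: "induces \<alpha> \<beta>" and min: "minimal_regular \<beta>"
    and S: "tw_ideal \<alpha> S"
  shows "S = {\<lambda>_. 0} \<or> S = UNIV"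
proof (cases "\<exists>z\<in>S. z \<noteq> (\<lambda>_. 0)")
  case False
  then show ?thesis using S unfolding tw_ideal_def by blast
next
  case True
  then obtain g c where c: "c \<noteq> 0" and "tw_monom g c \<in> S"
    using tw_ideal_contains_monom[OF co ind min S] by blast
  then have "tw_mult \<alpha> (tw_monom (- g) (inverse (c * \<alpha> (- g) g * \<alpha> 0 0))) (tw_monom g c) \<in> S"
    using S unfolding tw_ideal_def by blast
  also have "tw_mult \<alpha> (tw_monom (- g) (inverse (c * \<alpha> (- g) g * \<alpha> 0 0))) (tw_monom g c) = tw_unit \<alpha>"
    using c two_cocycle_nonzero[OF co]
    by (auto simp: fun_eq_iff tw_mult_monom_left tw_unit_def) (auto simp: tw_monom_def diff_eq_eq field_simps)
  finally have "tw_unit \<alpha> \<in> S" .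
  then have "tw_mult \<alpha> f (tw_unit \<alpha>) \<in> S" for f
    using S unfolding tw_ideal_def by blast
  then show ?thesis by (simp add: tw_mult_unit[OF co] subset_antisym subsetI)
qed

locale tw_graded_iso = vector_space scale
  for scale :: "'k::field \<Rightarrow> 'a::ring_1 \<Rightarrow> 'a" +
  fixes Agr :: "'g::{finite,ab_group_add} \<Rightarrow> 'a set"
    and \<alpha> :: "'g \<Rightarrow> 'g \<Rightarrow> 'k"
    and D :: "'a set"
    and \<phi> :: "('g \<Rightarrow> 'k) \<Rightarrow> 'a"
  assumes scale_mult_left: "scale c (x * y) = scale c x * y"
    and scale_mult_right: "scale c (x * y) = x * scale c y"
    and cocycle: "two_cocycle \<alpha>"
    and bij: "bij_betw \<phi> UNIV D"
    and hom_add: "\<phi> (\<lambda>g. f1 g + f2 g) = \<phi> f1 + \<phi> f2"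
    and hom_scale: "\<phi> (tw_scale c f) = scale c (\<phi> f)"
    and hom_mult: "\<phi> (tw_mult \<alpha> f1 f2) = \<phi> f1 * \<phi> f2"
    and hom_component: "\<phi> ` tw_component g = D \<inter> Agr g"
begin

lemma D_eq_range: "D = range \<phi>"
  using bij by (simp add: bij_betw_def)

lemma hom_inj: "\<phi> f1 = \<phi> f2 \<Longrightarrow> f1 = f2"
  using bij by (simp add: bij_betw_def inj_eq)

lemma hom_zero: "\<phi> (\<lambda>_. 0) = 0"
  using hom_add[of "\<lambda>_. 0" "\<lambda>_. 0"] by simp

lemma unit_in_degree_zero: "\<phi> (tw_unit \<alpha>) \<in> D \<inter> Agr 0"
proof -
  have "tw_unit \<alpha> \<in> tw_component 0"
    by (simp add: tw_unit_def tw_monom_def tw_component_def)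
  then show ?thesis using hom_component[of 0] by blast
qed

lemma unit_mult: "x \<in> D \<Longrightarrow> \<phi> (tw_unit \<alpha>) * x = x \<and> x * \<phi> (tw_unit \<alpha>) = x"
  using D_eq_range hom_mult tw_mult_unit[OF cocycle] by (metis imageE)

lemma unit_nonzero: "\<phi> (tw_unit \<alpha>) \<noteq> 0"
  using hom_inj hom_zero tw_unit_nonzero[OF cocycle] by metis

lemma tw_ideal_preimage:
  assumes "ideal_of_subalg scale D I"
  shows "tw_ideal \<alpha> (\<phi> -` I)"
proof -
  have "subspace I" and "\<forall>d\<in>D. \<forall>x\<in>I. d * x \<in> I \<and> x * d \<in> I"
    using assms unfolding ideal_of_subalg_def by blast+
  then show ?thesis
    unfolding tw_ideal_def
    by (simp add: hom_zero hom_add hom_scale hom_mult D_eq_range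
        subspace_0 subspace_add subspace_scale)
qed

lemma simple:
  assumes "induces \<alpha> \<beta>" and "minimal_regular \<beta>"
  shows "simple_subalg scale D"
  unfolding simple_subalg_def
proof (intro conjI allI impI)
  have "\<phi> (tw_unit \<alpha>) \<in> D" using unit_in_degree_zero by blast
  moreover from this have "\<phi> (tw_unit \<alpha>) * \<phi> (tw_unit \<alpha>) \<noteq> 0"
    using unit_mult unit_nonzero by simp
  ultimately show "\<exists>x\<in>D. \<exists>y\<in>D. x * y \<noteq> 0" by blast
next
  fix I assume I: "ideal_of_subalg scale D I"
  then have "I \<subseteq> D" and "0 \<in> I"
    unfolding ideal_of_subalg_def using subspace_0 by blast+
  have I_eq: "I = \<phi> ` (\<phi> -` I)"
    using \<open>I \<subseteq> D\<close> D_eq_range by (simp add: image_vimage_eq inf_absorb1)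
  from tw_ideal_trivial[OF cocycle assms tw_ideal_preimage[OF I]]
  show "I = {0} \<or> I = D"
  proof
    assume "\<phi> -` I = {\<lambda>_. 0}"
    then have "I = {0}" using I_eq hom_zero by simp
    then show ?thesis ..
  next
    assume "\<phi> -` I = UNIV"
    then have "I = D" using I_eq D_eq_range by simp
    then show ?thesis ..
  qed
qed

lemma central:
  assumes "induces \<alpha> \<beta>" and "minimal_regular \<beta>"
  shows "central_subalg scale D"
  unfolding central_subalg_def
proof (intro bexI[of _ "\<phi> (tw_unit \<alpha>)"] conjI set_eqI iffI)
  show "\<phi> (tw_unit \<alpha>) \<in> D" and "\<forall>x\<in>D. \<phi> (tw_unit \<alpha>) * x = x \<and> x * \<phi> (tw_unit \<alpha>) = x"
    using unit_in_degree_zero unit_mult by blast+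
next
  fix z assume "z \<in> {z \<in> D. \<forall>x\<in>D. z * x = x * z}"
  then obtain f where z: "z = \<phi> f" and "\<forall>h. \<phi> h * \<phi> f = \<phi> f * \<phi> h"
    using D_eq_range by auto
  then have "\<forall>h. tw_mult \<alpha> h f = tw_mult \<alpha> f h"
    using hom_inj hom_mult by metis
  then have "f = tw_scale (f 0 * \<alpha> 0 0) (tw_unit \<alpha>)"
    by (rule tw_center[OF cocycle assms])
  then show "z \<in> range (\<lambda>c. scale c (\<phi> (tw_unit \<alpha>)))"
    unfolding z by (metis hom_scale rangeI)
next
  fix z assume "z \<in> range (\<lambda>c. scale c (\<phi> (tw_unit \<alpha>)))"
  then obtain c where c: "z = scale c (\<phi> (tw_unit \<alpha>))" by blast
  then have "z \<in> D" using D_eq_range hom_scale by (metis rangeI)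
  moreover have "z * x = x * z" if "x \<in> D" for x
    unfolding c using that unit_mult scale_mult_left scale_mult_right by metis
  ultimately show "z \<in> {z \<in> D. \<forall>x\<in>D. z * x = x * z}" by blast
qed

end

lemma graded_iso_twisted_simple_central:
  assumes "k_algebra scale" and "two_cocycle \<alpha>" and "induces \<alpha> \<beta>" and "minimal_regular \<beta>"
    and "graded_iso_twisted scale Agr \<alpha> D"
  shows "simple_subalg scale D \<and> central_subalg scale D \<and>
    (\<exists>e\<in>D \<inter> Agr 0. \<forall>x\<in>D. e * x = x \<and> x * e = x)"
proof -
  obtain \<phi> where "tw_graded_iso scale Agr \<alpha> D \<phi>"
    using assms(1,2,5)
    unfolding k_algebra_def graded_iso_twisted_def tw_graded_iso_def tw_graded_iso_axioms_def
    by meson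
  then interpret tw_graded_iso scale Agr \<alpha> D \<phi> .
  show ?thesis
    using simple[OF assms(3,4)] central[OF assms(3,4)] unit_in_degree_zero unit_mult by blast
qed

lemma degree_zero_central:
  fixes scale :: "'k::field \<Rightarrow> 'a::ring_1 \<Rightarrow> 'a"
    and Agr :: "'g::{finite,ab_group_add} \<Rightarrow> 'a set"
  assumes "vector_space scale" and "graded_algebra scale Agr" and "regular_grading scale Agr \<beta>"
    and "\<forall>h. \<beta> 0 h = 1" and "e \<in> Agr 0"
  shows "e * y = y * e"
proof -
  obtain f where f: "\<forall>g. f g \<in> Agr g" and y: "y = (\<Sum>g\<in>UNIV. f g)"
    using assms(2) unfolding graded_algebra_def by metis
  have "e * f g = f g * e" for g
    using assms(3-5) f vector_space.vector_space_assms(4)[OF assms(1)]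
    unfolding regular_grading_def by metis
  then show ?thesis
    unfolding y by (simp add: sum_distrib_left sum_distrib_right)
qed

theorem mainTheorem7:
  fixes scale :: "'k::field_char_0 \<Rightarrow> 'a::ring_1 \<Rightarrow> 'a"
    and Agr :: "'g::{finite,ab_group_add} \<Rightarrow> 'a set"
    and \<beta> :: "'g \<Rightarrow> 'g \<Rightarrow> 'k"
    and k :: nat
    and D :: "nat \<Rightarrow> 'a set"
    and \<alpha> :: "nat \<Rightarrow> 'g \<Rightarrow> 'g \<Rightarrow> 'k"
  assumes "alg_closed_field TYPE('k)"
    and "fin_dim_algebra scale"
    and "graded_algebra scale Agr"
    and "regular_grading scale Agr \<beta>"
    and "minimal_regular \<beta>"
    and "\<forall>i<k. graded_subalgebra scale Agr (D i)"
    and "\<forall>i<k. \<forall>j<k. i \<noteq> j \<longrightarrow> (\<forall>x\<in>D i. \<forall>y\<in>D j. x * y = 0)"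
    and "\<forall>i<k. two_cocycle (\<alpha> i) \<and> induces (\<alpha> i) \<beta> \<and> graded_iso_twisted scale Agr (\<alpha> i) (D i)"
    and "\<forall>a. \<exists>!(d, j). (\<forall>i<k. d i \<in> D i) \<and> (\<forall>i\<ge>k. d i = 0) \<and> j \<in> jacobson_radical \<and>
            a = (\<Sum>i<k. d i) + j"
  shows "(\<forall>i<k. simple_subalg scale (D i) \<and> central_subalg scale (D i)) \<and>
         (\<forall>i<k. \<forall>j<k. i \<noteq> j \<longrightarrow>
            (\<forall>x\<in>D i. \<forall>y\<in>jacobson_radical. \<forall>z\<in>D j. x * y * z = 0))"
proof -
  have alg: "k_algebra scale" using assms(2) unfolding fin_dim_algebra_def by blast
  have D: "simple_subalg scale (D i) \<and> central_subalg scale (D i) \<and>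
      (\<exists>e\<in>D i \<inter> Agr 0. \<forall>x\<in>D i. e * x = x \<and> x * e = x)" if "i < k" for i
    using graded_iso_twisted_simple_central[OF alg _ _ assms(5)] assms(8) that by blast
  have "x * y * z = 0" if ij: "i < k" "j < k" "i \<noteq> j" and "x \<in> D i" "z \<in> D j" for i j x y z
  proof -
    obtain ei where ei: "ei \<in> D i" "ei \<in> Agr 0" "\<forall>x\<in>D i. ei * x = x \<and> x * ei = x"
      using D[OF ij(1)] by blast
    obtain ej where ej: "ej \<in> D j" "\<forall>x\<in>D j. ej * x = x \<and> x * ej = x"
      using D[OF ij(2)] by blast
    have "ei * y = y * ei"
      using degree_zero_central[OF _ assms(3,4) _ ei(2)] alg[unfolded k_algebra_def] induces_zero(2) assms(8) ij(1) by blast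
    then have "x * y * z = x * y * (ei * ej) * z"
      using ei(3) ej(2) \<open>x \<in> D i\<close> \<open>z \<in> D j\<close> by (metis mult.assoc)
    also have "ei * ej = 0" using assms(7) ij ei(1) ej(1) by blast
    finally show ?thesis by simp
  qed
  then show ?thesis using D by blast
qed

end
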